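(* Let $k$ be a perfect field of characteristic $p>2$, $N\ge2$ with $p\nmid N+1$, let $\eta\in W_2(k)$ and $\lambda=\eta\bmod p\in k$. If $\mathbb{HD}^{p-1}_{N+1}(\lambda)\ne0$, then $\mathbb{HD}^{2p-1}_{N+1}(\eta)$ is invertible in $W_2(k)$, so the fraction $\mathbb{HD}^{p-1}_{N+1}(\eta)/\mathbb{HD}^{2p-1}_{N+1}(\eta)\in W_2(k)$ is well defined, and it depends only on $\lambda$.
   Context: $\mathbb{HD}^P_M(X)=\sum_{i=0}^{[P/M]}c_i(-M)^{P-iM}X^{iM}\in\mathbb{Z}[X]$ with $c_i=\binom{P}{i}\binom{P-i}{i}\cdots\binom{P-(M-1)i}{i}$ (the Hasse--Dwork polynomial), evaluated in $k$ or $W_2(k)$. *)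

theory Defs
  imports Main
begin

definition hd_c :: "nat \<Rightarrow> nat \<Rightarrow> nat \<Rightarrow> int" where
  "hd_c P M i = (\<Prod>j<M. int ((P - j * i) choose i))"

definition hd_coeff :: "nat \<Rightarrow> nat \<Rightarrow> nat \<Rightarrow> int" where
  "hd_coeff P M i = hd_c P M i * (- int M) ^ (P - i * M)"

definition HD :: "nat \<Rightarrow> nat \<Rightarrow> 'a::comm_ring_1 \<Rightarrow> 'a" where
  "HD P M x = (\<Sum>i\<le>P div M. of_int (hd_coeff P M i) * x ^ (i * M))"

text \<open>Witt vectors of length 2 over a ring of characteristic p = CHAR('a):
  pairs (a0,a1), with the Witt vector ring laws (ghost components a0, a0^p + p a1).\<close>
type_synonym 'a w2 = "'a \<times> 'a"

definition w2_zero :: "'a::comm_ring_1 w2" where "w2_zero = (0, 0)"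
definition w2_one :: "'a::comm_ring_1 w2" where "w2_one = (1, 0)"

definition w2_add :: "'a::comm_ring_1 w2 \<Rightarrow> 'a w2 \<Rightarrow> 'a w2" where
  "w2_add a b = (let p = CHAR('a) in
     (fst a + fst b,
      snd a + snd b - (\<Sum>i\<in>{1..<p}. of_nat ((p choose i) div p) * fst a ^ i * fst b ^ (p - i))))"

definition w2_mul :: "'a::comm_ring_1 w2 \<Rightarrow> 'a w2 \<Rightarrow> 'a w2" where
  "w2_mul a b = (let p = CHAR('a) in
     (fst a * fst b, fst a ^ p * snd b + fst b ^ p * snd a))"

text \<open>Image of an integer n in W_2: the Witt vector with ghost components (n, n).\<close>
definition w2_of_int :: "int \<Rightarrow> 'a::comm_ring_1 w2" where
  "w2_of_int n = (let p = CHAR('a) in (of_int n, of_int ((n - n ^ p) div int p)))"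

primrec w2_pow :: "'a::comm_ring_1 w2 \<Rightarrow> nat \<Rightarrow> 'a w2" where
  "w2_pow x 0 = w2_one"
| "w2_pow x (Suc n) = w2_mul x (w2_pow x n)"

definition HD_W2 :: "nat \<Rightarrow> nat \<Rightarrow> 'a::comm_ring_1 w2 \<Rightarrow> 'a w2" where
  "HD_W2 P M x = foldr (\<lambda>i acc. w2_add (w2_mul (w2_of_int (hd_coeff P M i)) (w2_pow x (i * M))) acc)
                       [0..<Suc (P div M)] w2_zero"

definition w2_unit :: "'a::comm_ring_1 w2 \<Rightarrow> bool" where
  "w2_unit x \<longleftrightarrow> (\<exists>y. w2_mul x y = w2_one)"

definition w2_div :: "'a::comm_ring_1 w2 \<Rightarrow> 'a w2 \<Rightarrow> 'a w2" where
  "w2_div x y = w2_mul x (SOME z. w2_mul y z = w2_one)"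

end

theory Submission
  imports Defs "HOL-Computational_Algebra.Primes"
begin

text \<open>Write M = N + 1 and c = (-M)^p, a unit of k since p does not divide M. Modulo p,
  binom(p + a, i) = binom(a, i) for i < p; as M \<ge> 2 forces i < p, this gives
  HD^{2p-1}_M = c HD^{p-1}_M in k[X], and the same relation for the formal derivatives.
  In W_2(k) an integer polynomial f satisfies f(\<lambda>, e) = (f(\<lambda>), s_f(\<lambda>) + f'(\<lambda>)^p e),
  where s_f(\<lambda>) is the second component of f(\<lambda>, 0). Since (A, a) / (B, b) =
  (A/B, a/B^p - A^p b/B^{2p}), the contributions of e to numerator and denominator cancel once
  B = cA and B' = cA'.\<close>

lemma of_nat_power_CHAR:
  assumes "prime CHAR('a::comm_semiring_1)"
  shows "(of_nat n :: 'a) ^ CHAR('a) = of_nat n"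
proof -
  have "(of_nat n :: 'a) = (\<Sum>i<n. 1)" by simp
  then show ?thesis using freshmans_dream_sum[OF assms refl, of "\<lambda>_. 1" "{..<n}"] by simp
qed

lemma of_nat_choose_prime_add:
  assumes "CHAR('a::comm_semiring_1) = p" "prime p" "i < p"
  shows "(of_nat ((p + a) choose i) :: 'a) = of_nat (a choose i)"
proof -
  have "(of_nat ((p + a) choose i) :: 'a) = (\<Sum>k\<le>i. of_nat (p choose k) * of_nat (a choose (i - k)))"
    by (simp only: vandermonde [symmetric] of_nat_sum of_nat_mult)
  also have "\<dots> = (\<Sum>k\<le>i. if k = 0 then of_nat (a choose i) else 0)"
  proof (rule sum.cong)
    fix k assume "k \<in> {..i}"
    then have "p dvd p choose k" if "k \<noteq> 0"
      using assms(2,3) that by (intro dvd_choose_prime) auto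
    then have "(of_nat (p choose k) :: 'a) = 0" if "k \<noteq> 0"
      using assms(1) that of_nat_eq_0_iff_char_dvd by blast
    then show "of_nat (p choose k) * of_nat (a choose (i - k)) = (if k = 0 then of_nat (a choose i) else (0 :: 'a))"
      by simp
  qed simp
  finally show ?thesis by simp
qed

lemma of_int_hd_c_2p_minus_1:
  assumes "CHAR('a::comm_ring_1) = p" "prime p" "M \<ge> 2" "i * M \<le> 2 * p - 1"
  shows "(of_int (hd_c (2 * p - 1) M i) :: 'a) = (if i * M \<le> p - 1 then of_int (hd_c (p - 1) M i) else 0)"
proof -
  have "p \<ge> 2" using assms(2) prime_ge_2_nat by blast
  have "2 * i \<le> i * M" using assms(3) by simp
  then have "i < p" using assms(4) \<open>p \<ge> 2\<close> by linarith
  note shift = of_nat_choose_prime_add[OF assms(1,2) \<open>i < p\<close>]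
  show ?thesis
  proof (cases "i * M \<le> p - 1")
    case True
    have "(of_nat ((2 * p - 1 - j * i) choose i) :: 'a) = of_nat ((p - 1 - j * i) choose i)" if "j < M" for j
    proof -
      from that have "j * i \<le> p - 1" using True by (metis less_imp_le mult.commute mult_le_mono1 le_trans)
      then have "2 * p - 1 - j * i = p + (p - 1 - j * i)" by linarith
      then show ?thesis using shift by simp
    qed
    with True show ?thesis by (simp add: hd_c_def)
  next
    case False
    define j where "j = (p - 1) div i"
    have "j * i \<le> p - 1" unfolding j_def by (rule div_times_less_eq_dividend)
    have "j < M"
    proof (rule ccontr)
      assume "\<not> j < M"
      then have "i * M \<le> j * i" by (simp add: mult.commute)
      with False \<open>j * i \<le> p - 1\<close> show False by linarith
    qed
    have "p - 1 - j * i = (p - 1) mod i" unfolding j_def by (rule minus_div_mult_eq_mod)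
    then have "2 * p - 1 - j * i = p + (p - 1) mod i" using \<open>j * i \<le> p - 1\<close> by linarith
    moreover have "(p - 1) mod i < i" using False by (intro mod_less_divisor) (cases i, auto)
    ultimately have "(of_nat ((2 * p - 1 - j * i) choose i) :: 'a) = 0"
      using shift by (simp add: binomial_eq_0)
    with \<open>j < M\<close> have "(\<Prod>j<M. (of_nat ((2 * p - 1 - j * i) choose i) :: 'a)) = 0"
      by (intro prod_zero) auto
    with False show ?thesis by (simp add: hd_c_def)
  qed
qed

lemma of_int_hd_coeff_2p_minus_1:
  assumes "CHAR('a::comm_ring_1) = p" "prime p" "M \<ge> 2" "i * M \<le> 2 * p - 1"
  shows "(of_int (hd_coeff (2 * p - 1) M i) :: 'a)
       = (if i * M \<le> p - 1 then (- of_nat M) ^ p * of_int (hd_coeff (p - 1) M i) else 0)"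
proof (cases "i * M \<le> p - 1")
  case True
  then have "2 * p - 1 - i * M = p + (p - 1 - i * M)" by linarith
  then show ?thesis
    using True of_int_hd_c_2p_minus_1[OF assms] by (simp add: hd_coeff_def power_add)
next
  case False
  then show ?thesis using of_int_hd_c_2p_minus_1[OF assms] by (simp add: hd_coeff_def)
qed

lemma sum_hd_coeff_2p_minus_1:
  fixes F :: "'a::comm_ring_1 \<Rightarrow> nat \<Rightarrow> 'b::comm_monoid_add"
  assumes "CHAR('a) = p" "prime p" "M \<ge> 2" "\<And>i. F 0 i = 0"
  shows "(\<Sum>i\<le>(2 * p - 1) div M. F (of_int (hd_coeff (2 * p - 1) M i)) i)
       = (\<Sum>i\<le>(p - 1) div M. F ((- of_nat M) ^ p * of_int (hd_coeff (p - 1) M i)) i)"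
proof (rule sum.mono_neutral_cong_right)
  show "{..(p - 1) div M} \<subseteq> {..(2 * p - 1) div M}" by (auto intro: div_le_mono order_trans)
  have range: "i \<le> P div M \<longleftrightarrow> i * M \<le> P" for i P
    using assms(3) by (simp add: less_eq_div_iff_mult_less_eq)
  show "\<forall>i\<in>{..(2 * p - 1) div M} - {..(p - 1) div M}. F (of_int (hd_coeff (2 * p - 1) M i)) i = 0"
    using of_int_hd_coeff_2p_minus_1[OF assms(1-3)] assms(4) by (simp add: range)
  show "F (of_int (hd_coeff (2 * p - 1) M i)) i = F ((- of_nat M) ^ p * of_int (hd_coeff (p - 1) M i)) i"
    if "i \<in> {..(p - 1) div M}" for i
    using that of_int_hd_coeff_2p_minus_1[OF assms(1-3), of i] by (simp add: range)
qed simp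

definition HD_deriv :: "nat \<Rightarrow> nat \<Rightarrow> 'a::comm_ring_1 \<Rightarrow> 'a" where
  "HD_deriv P M x = (\<Sum>i\<le>P div M. of_int (hd_coeff P M i) * of_nat (i * M) * x ^ (i * M - 1))"

lemma HD_2p_minus_1:
  assumes "CHAR('a::comm_ring_1) = p" "prime p" "M \<ge> 2"
  shows "HD (2 * p - 1) M (x :: 'a) = (- of_nat M) ^ p * HD (p - 1) M x"
  unfolding HD_def sum_distrib_left
  using sum_hd_coeff_2p_minus_1[OF assms, of "\<lambda>a i. a * x ^ (i * M)"] by (simp add: mult.assoc)

lemma HD_deriv_2p_minus_1:
  assumes "CHAR('a::comm_ring_1) = p" "prime p" "M \<ge> 2"
  shows "HD_deriv (2 * p - 1) M (x :: 'a) = (- of_nat M) ^ p * HD_deriv (p - 1) M x"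
  unfolding HD_deriv_def sum_distrib_left
  using sum_hd_coeff_2p_minus_1[OF assms, of "\<lambda>a i. a * of_nat (i * M) * x ^ (i * M - 1)"]
  by (simp add: mult.assoc)

lemma w2_mul_eq:
  "w2_mul a b = (fst a * fst b, fst a ^ CHAR('a) * snd b + fst b ^ CHAR('a) * snd (a :: 'a::comm_ring_1 w2))"
  by (simp add: w2_mul_def Let_def)

lemma fst_w2_add [simp]: "fst (w2_add a b) = fst a + fst (b :: 'a::comm_ring_1 w2)"
  by (simp add: w2_add_def Let_def)

lemma fst_w2_of_int [simp]: "fst (w2_of_int n :: 'a::comm_ring_1 w2) = of_int n"
  by (simp add: w2_of_int_def Let_def)

lemma snd_w2_add_shift:
  assumes "fst a = fst a'" "fst b = fst (b' :: 'a::comm_ring_1 w2)"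
  shows "snd (w2_add a b) = snd (w2_add a' b') + (snd a - snd a') + (snd b - snd b')"
  using assms by (simp add: w2_add_def Let_def)

lemma w2_pow_Pair:
  "w2_pow (l, e) n = (l ^ n, of_nat n * l ^ ((n - 1) * CHAR('a)) * (e :: 'a::comm_ring_1))"
proof (induction n)
  case 0
  then show ?case by (simp add: w2_one_def)
next
  case (Suc n)
  then show ?case
    by (cases n) (simp_all add: w2_one_def w2_mul_eq algebra_simps flip: power_mult power_add)
qed

lemma fst_foldr_w2_eval:
  "fst (foldr (\<lambda>i acc. w2_add (w2_mul (w2_of_int (g i)) (w2_pow (l, e) (k i))) acc) xs w2_zero)
     = (\<Sum>i\<leftarrow>xs. of_int (g i) * l ^ k i :: 'a::comm_ring_1)"
  by (induction xs) (simp_all add: w2_zero_def w2_mul_eq w2_pow_Pair)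

lemma snd_foldr_w2_eval:
  fixes g :: "nat \<Rightarrow> int" and k :: "nat \<Rightarrow> nat" and xs :: "nat list" and l e :: "'a::comm_ring_1"
  defines "ev \<equiv> \<lambda>x. foldr (\<lambda>i acc. w2_add (w2_mul (w2_of_int (g i)) (w2_pow x (k i))) acc) xs w2_zero"
  shows "snd (ev (l, e)) = snd (ev (l, 0))
           + (\<Sum>i\<leftarrow>xs. of_int (g i) ^ CHAR('a) * of_nat (k i) * l ^ ((k i - 1) * CHAR('a))) * e"
  unfolding ev_def
proof (induction xs)
  case Nil
  then show ?case by (simp add: w2_zero_def)
next
  case (Cons i xs)
  let ?term = "\<lambda>x. w2_mul (w2_of_int (g i)) (w2_pow x (k i)) :: 'a w2"
  let ?rest = "\<lambda>x. foldr (\<lambda>i acc. w2_add (w2_mul (w2_of_int (g i)) (w2_pow x (k i))) acc) xs w2_zero"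
  have "snd (w2_add (?term (l, e)) (?rest (l, e)))
      = snd (w2_add (?term (l, 0)) (?rest (l, 0)))
        + (snd (?term (l, e)) - snd (?term (l, 0))) + (snd (?rest (l, e)) - snd (?rest (l, 0)))"
    by (rule snd_w2_add_shift) (simp add: w2_mul_eq w2_pow_Pair, simp only: fst_foldr_w2_eval)
  then show ?case
    using Cons.IH by (simp add: w2_mul_eq w2_pow_Pair algebra_simps)
qed

lemma fst_HD_W2 [simp]: "fst (HD_W2 P M x) = HD P M (fst x)"
proof (cases x)
  case (Pair l e)
  have "set [0..<Suc (P div M)] = {..P div M}" by auto
  then show ?thesis
    unfolding HD_W2_def HD_def Pair
    by (simp only: fst_foldr_w2_eval interv_sum_list_conv_sum_set_nat fst_conv)
qed

lemma snd_HD_W2_Pair: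
  fixes l e :: "'a::comm_ring_1"
  assumes "prime CHAR('a)"
  shows "snd (HD_W2 P M (l, e)) = snd (HD_W2 P M (l, 0)) + HD_deriv P M l ^ CHAR('a) * e"
proof -
  have upt: "set [0..<Suc (P div M)] = {..P div M}" by auto
  have "HD_deriv P M l ^ CHAR('a)
      = (\<Sum>i\<le>P div M. of_int (hd_coeff P M i) ^ CHAR('a) * of_nat (i * M) * l ^ ((i * M - 1) * CHAR('a)))"
    by (simp add: HD_deriv_def freshmans_dream_sum[OF assms refl] power_mult_distrib
        of_nat_power_CHAR[OF assms] power_mult)
  then show ?thesis
    using snd_foldr_w2_eval[where g = "hd_coeff P M" and k = "\<lambda>i. i * M" and xs = "[0..<Suc (P div M)]"]
    unfolding HD_W2_def by (simp only: interv_sum_list_conv_sum_set_nat upt)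
qed

lemma w2_mul_eq_one_iff:
  fixes y z :: "'a::field w2"
  assumes "fst y \<noteq> 0"
  shows "w2_mul y z = w2_one \<longleftrightarrow> z = (1 / fst y, - snd y / fst y ^ (2 * CHAR('a)))"
proof
  assume "w2_mul y z = w2_one"
  then have z1: "fst y * fst z = 1" and z2: "fst y ^ CHAR('a) * snd z + fst z ^ CHAR('a) * snd y = 0"
    by (simp_all add: w2_mul_eq w2_one_def)
  from z1 assms have "fst z = 1 / fst y" by (simp add: field_simps)
  with z2 assms have "snd z = - snd y / fst y ^ (2 * CHAR('a))"
    by (simp add: field_simps power_mult_distrib power_mult power2_eq_square add_eq_0_iff2)
  with \<open>fst z = 1 / fst y\<close> show "z = (1 / fst y, - snd y / fst y ^ (2 * CHAR('a)))"
    by (simp add: prod_eq_iff)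
next
  assume "z = (1 / fst y, - snd y / fst y ^ (2 * CHAR('a)))"
  then show "w2_mul y z = w2_one"
    using assms by (simp add: w2_mul_eq w2_one_def field_simps power_mult_distrib power_mult power2_eq_square)
qed

lemma w2_unit_if_fst_nonzero:
  fixes y :: "'a::field w2"
  shows "fst y \<noteq> 0 \<Longrightarrow> w2_unit y"
  unfolding w2_unit_def using w2_mul_eq_one_iff by blast

lemma w2_div_eq:
  fixes x y :: "'a::field w2"
  assumes "fst y \<noteq> 0"
  shows "w2_div x y
    = (fst x / fst y, snd x / fst y ^ CHAR('a) - fst x ^ CHAR('a) * snd y / fst y ^ (2 * CHAR('a)))"
proof -
  have "(SOME z. w2_mul y z = w2_one) = (1 / fst y, - snd y / fst y ^ (2 * CHAR('a)))"
    using w2_mul_eq_one_iff[OF assms] by simp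
  then show ?thesis
    using assms by (simp add: w2_div_def w2_mul_eq field_simps power_mult_distrib power_mult power2_eq_square)
qed

lemma w2_div_shift_invariant:
  fixes x y :: "'a::field w2"
  assumes "fst y \<noteq> 0" "fst y = c * fst x" "b = c * a"
  shows "w2_div (fst x, snd x + a ^ CHAR('a) * e) (fst y, snd y + b ^ CHAR('a) * e) = w2_div x y"
proof -
  have "fst x ^ CHAR('a) * b ^ CHAR('a) = fst y ^ CHAR('a) * a ^ CHAR('a)"
    using assms(2,3) by (simp add: power_mult_distrib)
  then have "fst x ^ CHAR('a) * b ^ CHAR('a) * e / fst y ^ (2 * CHAR('a)) = a ^ CHAR('a) * e / fst y ^ CHAR('a)"
    using assms(1) by (simp add: mult_2 power_add)
  then show ?thesis
    using assms(1) by (simp add: w2_div_eq add_divide_distrib diff_divide_distrib algebra_simps)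
qed

lemma HD_2p_minus_1_neq_0:
  assumes "CHAR('a::idom) = p" "prime p" "M \<ge> 2" "\<not> p dvd M" "HD (p - 1) M (x :: 'a) \<noteq> 0"
  shows "HD (2 * p - 1) M x \<noteq> 0"
proof -
  have "(of_nat M :: 'a) \<noteq> 0" using assms(1,4) of_nat_eq_0_iff_char_dvd by blast
  with assms(5) show ?thesis unfolding HD_2p_minus_1[OF assms(1-3)] by simp
qed

lemma w2_div_HD_W2_eq_at_fst:
  fixes eta :: "'a::field w2"
  assumes "CHAR('a) = p" "prime p" "M \<ge> 2" "HD (2 * p - 1) M (fst eta) \<noteq> 0"
  shows "w2_div (HD_W2 (p - 1) M eta) (HD_W2 (2 * p - 1) M eta)
       = w2_div (HD_W2 (p - 1) M (fst eta, 0)) (HD_W2 (2 * p - 1) M (fst eta, 0))"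
proof -
  obtain l e where eta: "eta = (l, e)" by (cases eta)
  define x where "x = HD_W2 (p - 1) M (l, 0)"
  define y where "y = HD_W2 (2 * p - 1) M (l, 0)"
  have expand: "HD_W2 P M (l, e) = (fst (HD_W2 P M (l, 0)), snd (HD_W2 P M (l, 0)) + HD_deriv P M l ^ CHAR('a) * e)"
    for P
    using snd_HD_W2_Pair[OF assms(2)[folded assms(1)], where e = e] by (simp add: prod_eq_iff)
  have "fst y \<noteq> 0" "fst y = (- of_nat M) ^ p * fst x"
    using assms(4) HD_2p_minus_1[OF assms(1-3)] by (simp_all add: x_def y_def eta)
  then show ?thesis
    unfolding eta fst_conv expand x_def[symmetric] y_def[symmetric]
    by (rule w2_div_shift_invariant) (rule HD_deriv_2p_minus_1[OF assms(1-3)])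
qed

theorem corollary3p11:
  fixes lam :: "'a::field" and p N :: nat
  assumes "CHAR('a) = p" and "p > 2"
    and "\<forall>x::'a. \<exists>y. y ^ p = x"
    and "N \<ge> 2" and "\<not> p dvd (N + 1)"
    and "HD (p - 1) (N + 1) lam \<noteq> 0"
  shows "(\<forall>eta :: 'a w2. fst eta = lam \<longrightarrow> w2_unit (HD_W2 (2 * p - 1) (N + 1) eta))
       \<and> (\<forall>eta eta' :: 'a w2. fst eta = lam \<longrightarrow> fst eta' = lam \<longrightarrow>
            w2_div (HD_W2 (p - 1) (N + 1) eta) (HD_W2 (2 * p - 1) (N + 1) eta)
          = w2_div (HD_W2 (p - 1) (N + 1) eta') (HD_W2 (2 * p - 1) (N + 1) eta'))"
proof -
  have "prime p" using assms(1,2) prime_CHAR_semidom[where 'a = 'a] by simp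
  have "N + 1 \<ge> 2" using assms(4) by simp
  have HD_nonzero: "HD (2 * p - 1) (N + 1) lam \<noteq> 0"
    using HD_2p_minus_1_neq_0[OF assms(1) \<open>prime p\<close> \<open>N + 1 \<ge> 2\<close> assms(5,6)] .
  note quotient = w2_div_HD_W2_eq_at_fst[OF assms(1) \<open>prime p\<close> \<open>N + 1 \<ge> 2\<close>]
  show ?thesis
  proof (intro conjI allI impI)
    fix eta :: "'a w2"
    assume "fst eta = lam"
    with HD_nonzero show "w2_unit (HD_W2 (2 * p - 1) (N + 1) eta)"
      by (intro w2_unit_if_fst_nonzero) simp
  next
    fix eta eta' :: "'a w2"
    assume "fst eta = lam" "fst eta' = lam"
    with HD_nonzero quotient[of eta] quotient[of eta'] show
      "w2_div (HD_W2 (p - 1) (N + 1) eta) (HD_W2 (2 * p - 1) (N + 1) eta)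
     = w2_div (HD_W2 (p - 1) (N + 1) eta') (HD_W2 (2 * p - 1) (N + 1) eta')"
      by simp
  qed
qed

end
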